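(* Let $n\geq 3$ be an odd integer and define $$\phi(x)=\frac{5}{4}\sin(x)+\sum_{k=2}^{n-1}\sin(kx)+\frac{2n-3}{4n}\sin(nx).$$ Then $\phi(x)\geq 0$ for all $x\in[0,\pi]$. *)

theory Defs
  imports "HOL-Analysis.Analysis"
begin

end

theory Submission
  imports Defs
begin

text \<open>
  Put \<open>N = n\<close> and \<open>x = \<pi> - 2u\<close> with \<open>u \<in> [0, \<pi>/2]\<close>. Multiplying \<open>\<phi>(x)\<close> by \<open>2 sin (x/2) = 2 cos u\<close>
  telescopes the sine sum, and since \<open>n\<close> is odd the result is
  \<open>\<psi>(u) = sin u (cos\<^sup>2 u + 2 cos\<^sup>2 (N u)) - 3/(2N) cos u sin (2 N u)\<close>,
  which makes sense for every real \<open>N \<ge> 3\<close>. For \<open>2 N u \<le> 12/5\<close> the angles are small and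
  \<open>\<psi>(u) \<ge> 0\<close> follows from Taylor bounds. For \<open>2 N u > 12/5\<close> one has \<open>N sin u \<ge> 7/6\<close>, and
  \<open>\<psi>(u)\<close> is a positive semidefinite quadratic form in \<open>(sin (N u), cos (N u))\<close>.
\<close>

definition psi :: "real \<Rightarrow> real \<Rightarrow> real" where
  "psi N u = sin u * (cos u ^ 2 + 2 * cos (N * u) ^ 2) - 3 / (2 * N) * cos u * sin (2 * N * u)"

lemma Maclaurin_cos_bound:
  "\<bar>cos x - (\<Sum>m<n. cos_coeff m * x ^ m)\<bar> \<le> inverse (fact n) * \<bar>x\<bar> ^ n"
proof -
  obtain t where "cos x = (\<Sum>m<n. cos_coeff m * x ^ m) + (cos (t + 1/2 * real n * pi) / fact n) * x ^ n"
    using Maclaurin_cos_expansion by blast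
  hence "\<bar>cos x - (\<Sum>m<n. cos_coeff m * x ^ m)\<bar> = \<bar>cos (t + 1/2 * real n * pi)\<bar> / fact n * \<bar>x\<bar> ^ n"
    by (simp add: abs_mult power_abs)
  also have "\<dots> \<le> 1 / fact n * \<bar>x\<bar> ^ n"
    by (intro mult_right_mono divide_right_mono) auto
  finally show ?thesis by (simp add: divide_inverse)
qed

lemma sin_ge_taylor7:
  fixes x :: real assumes "0 \<le> x"
  shows "x - x^3/6 + x^5/120 - x^7/5040 \<le> sin x"
  using Maclaurin_sin_bound[of x 7] assms
  by (simp add: sin_coeff_def lessThan_nat_numeral fact_numeral) (auto simp: abs_if split: if_splits)

lemma sin_le_taylor9:
  fixes x :: real assumes "0 \<le> x"
  shows "sin x \<le> x - x^3/6 + x^5/120 - x^7/5040 + x^9/362880"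
  using Maclaurin_sin_bound[of x 9] assms
  by (simp add: sin_coeff_def lessThan_nat_numeral fact_numeral) (auto simp: abs_if split: if_splits)

lemma cos_le_taylor6:
  fixes x :: real
  shows "cos x \<le> 1 - x^2/2 + x^4/24 + x^6/720"
  using Maclaurin_cos_bound[of x 6]
  by (simp add: cos_coeff_def lessThan_nat_numeral fact_numeral) (auto simp: abs_if split: if_splits)

lemma cos_ge_taylor8:
  fixes x :: real
  shows "1 - x^2/2 + x^4/24 - x^6/720 - x^8/40320 \<le> cos x"
  using Maclaurin_cos_bound[of x 8]
  by (simp add: cos_coeff_def lessThan_nat_numeral fact_numeral) (auto simp: abs_if split: if_splits)

lemma sin_ge_cubic:
  fixes x :: real assumes "0 \<le> x" "x \<le> 6"
  shows "x - x^3/6 \<le> sin x"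
proof -
  have "x^2 \<le> 6^2" using assms by (intro power_mono) auto
  hence "0 \<le> x^5 * (1/120 - x^2/5040)" using assms by simp
  moreover have "x^5 * (1/120 - x^2/5040) = x^5/120 - x^7/5040" by (simp add: algebra_simps eval_nat_numeral)
  ultimately show ?thesis using sin_ge_taylor7[OF assms(1)] by linarith
qed

lemma tan_taylor3_mult_cos_le_sin:
  fixes u :: real assumes "0 \<le> u" "u \<le> 2/5"
  shows "(u + u^3/3) * cos u \<le> sin u"
proof -
  have "(u + u^3/3) * cos u \<le> (u + u^3/3) * (1 - u^2/2 + u^4/24 + u^6/720)"
    using assms by (intro mult_left_mono cos_le_taylor6) auto
  moreover have "(u - u^3/6 + u^5/120 - u^7/5040) - (u + u^3/3) * (1 - u^2/2 + u^4/24 + u^6/720)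
     = u^5 * (2/15 - 13/840 * u^2 - u^4/2160)"
    by (simp add: eval_nat_numeral field_simps)
  moreover have "u^2 \<le> (2/5)^2" "u^4 \<le> (2/5)^4" using assms by (intro power_mono; simp)+
  hence "0 \<le> u^5 * (2/15 - 13/840 * u^2 - u^4/2160)" using assms by (simp add: power_divide)
  ultimately show ?thesis using sin_ge_taylor7[OF assms(1)] by linarith
qed

text \<open>The polynomial inequality behind the small-angle case, with \<open>w = 2 N u\<close> and \<open>p = 1/(2N)\<close>.\<close>

lemma psi_taylor_polynomial_nonneg:
  fixes p w :: real assumes "0 \<le> w" "w \<le> 12/5" "0 < p" "p \<le> 1/6"
  shows "0 \<le> (p*w + (p*w)^3/3) * (2 - (p*w)^2 + (1 - w^2/2 + w^4/24 - w^6/720 - w^8/40320))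
             - 3*p*(w - w^3/6 + w^5/120 - w^7/5040 + w^9/362880)"
proof -
  define z where "z = w^2"
  define q where "q = p^2"
  have expand: "(p*w + (p*w)^3/3) * (2 - (p*w)^2 + (1 - w^2/2 + w^4/24 - w^6/720 - w^8/40320))
             - 3*p*(w - w^3/6 + w^5/120 - w^7/5040 + w^9/362880)
     = p * w^5 * (1/60 - z/1260 - z^2/30240 - q^2/3 - q/6 + q*z/72 - q*z^2/2160 - q*z^3/120960)"
    unfolding z_def q_def by (simp add: eval_nat_numeral field_simps)
  have z: "0 \<le> z" "z \<le> 144/25" unfolding z_def using power_mono[of w "12/5" 2] assms
    by (auto simp: power_divide)
  have q: "0 \<le> q" "q \<le> 1/36" unfolding q_def using power_mono[of p "1/6" 2] assms
    by (auto simp: power_divide)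
  have "z^2 \<le> (144/25)^2" "z^3 \<le> (144/25)^3" "q^2 \<le> (1/36)^2" using z q by (intro power_mono; simp)+
  moreover from this have "q*z^2 \<le> (1/36)*(144/25)^2" "q*z^3 \<le> (1/36)*(144/25)^3"
    using z q by (intro mult_mono; simp)+
  moreover have "0 \<le> q*z" using z q by simp
  ultimately have "0 \<le> 1/60 - z/1260 - z^2/30240 - q^2/3 - q/6 + q*z/72 - q*z^2/2160 - q*z^3/120960"
    using z q by (simp add: power_divide, linarith)
  thus ?thesis unfolding expand using assms by simp
qed

lemma psi_nonneg_small:
  fixes u N :: real assumes N: "N \<ge> 3" and u: "0 \<le> u" "u \<le> pi/2" and small: "2*N*u \<le> 12/5"
  shows "0 \<le> psi N u"
proof -
  define w where "w = 2*N*u"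
  define p where "p = 1/(2*N)"
  have p: "0 < p" "p \<le> 1/6" using N unfolding p_def by (auto simp: field_simps)
  have uw: "u = p*w" unfolding p_def w_def using N by (simp add: field_simps)
  have w: "0 \<le> w" "w \<le> 12/5" unfolding w_def using N u small by auto
  have "u \<le> 1/6 * (12/5)" unfolding uw using p w by (intro mult_mono) auto
  hence u25: "u \<le> 2/5" by simp
  define T where "T = u + u^3/3"
  define X where "X = cos u ^ 2 + 2 * cos (N*u) ^ 2"
  define C where "C = 1 - w^2/2 + w^4/24 - w^6/720 - w^8/40320"
  define S where "S = w - w^3/6 + w^5/120 - w^7/5040 + w^9/362880"
  define Y where "Y = 2 - u^2 + C"
  have cos_u: "0 \<le> cos u" using u by (intro cos_ge_zero) auto
  have "sin u ^ 2 \<le> u ^ 2" using sin_x_le_x[OF u(1)] sin_ge_zero[of u] u by (intro power_mono) auto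
  hence "1 - u^2 \<le> cos u ^ 2" using sin_cos_squared_add[of u] by linarith
  moreover have "2 * cos (N*u) ^ 2 = 1 + cos w"
    using cos_double_cos[of "N*u"] unfolding w_def by (simp add: mult.assoc)
  ultimately have XY: "Y \<le> X" unfolding X_def Y_def C_def using cos_ge_taylor8[of w] by linarith
  have "0 \<le> (sin u - T * cos u) * X"
    unfolding T_def X_def using tan_taylor3_mult_cos_le_sin[OF u(1) u25] by simp
  moreover have "0 \<le> cos u * (T * (X - Y))" unfolding T_def using cos_u XY u by simp
  moreover have "0 \<le> cos u * (3*p*(S - sin w))" unfolding S_def using cos_u p sin_le_taylor9[OF w(1)] by simp
  moreover have "0 \<le> cos u * (T * Y - 3*p*S)"
    using cos_u psi_taylor_polynomial_nonneg[OF w p] unfolding T_def Y_def C_def S_def uw by simp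
  moreover have "psi N u = (sin u - T * cos u) * X + cos u * (T * (X - Y))
      + cos u * (3*p*(S - sin w)) + cos u * (T * Y - 3*p*S)"
    unfolding psi_def X_def w_def p_def by (simp add: algebra_simps)
  ultimately show ?thesis by linarith
qed

lemma mult_sin_ge_seven_sixths:
  fixes u N :: real assumes N: "N \<ge> 3" and u: "u \<le> pi/2" and large: "12/5 < 2*N*u"
  shows "7/6 \<le> N * sin u"
proof -
  define a where "a = 6/(5*N)"
  have a: "0 < a" "a \<le> 2/5" "a < u" using N large unfolding a_def by (auto simp: field_simps)
  have "sin a \<le> sin u" using a u pi_ge_two by (intro sin_monotone_2pi_le) auto
  moreover have "a - a^3/6 \<le> sin a" using a by (intro sin_ge_cubic) auto
  moreover have "a * a^2 \<le> a * (2/5)^2" using a by (intro mult_left_mono power_mono) auto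
  hence "a^3 \<le> 4/25 * a" by (simp add: power3_eq_cube power2_eq_square)
  ultimately have "73/75 * a \<le> sin u" by linarith
  hence "N * (73/75 * a) \<le> N * sin u" using N by (intro mult_left_mono) auto
  moreover have "N * (73/75 * a) = 6/5 * (73/75)" unfolding a_def using N by simp
  ultimately show ?thesis by simp
qed

lemma quadratic_form_nonneg:
  fixes \<alpha> \<beta> \<gamma> s c :: real assumes "0 < \<gamma>" "\<beta>^2 \<le> 4 * \<alpha> * \<gamma>"
  shows "0 \<le> \<alpha> * s^2 + \<gamma> * c^2 - \<beta> * s * c"
proof -
  have "\<gamma> * (\<alpha> * s^2 + \<gamma> * c^2 - \<beta> * s * c) = (\<gamma> * c - \<beta> * s / 2)^2 + (\<alpha> * \<gamma> - \<beta>^2/4) * s^2"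
    by (simp add: field_simps eval_nat_numeral)
  also have "\<dots> \<ge> 0" using assms by simp
  finally show ?thesis using assms(1) by (simp add: zero_le_mult_iff)
qed

lemma psi_nonneg_large:
  fixes u N :: real assumes N: "N \<ge> 3" and u: "0 \<le> u" "u \<le> pi/2" and large: "12/5 < 2*N*u"
  shows "0 \<le> psi N u"
proof -
  define \<alpha> where "\<alpha> = sin u * cos u ^ 2"
  define \<beta> where "\<beta> = 3/N * cos u"
  define \<gamma> where "\<gamma> = sin u * cos u ^ 2 + 2 * sin u"
  have Nsin: "7/6 \<le> N * sin u" using mult_sin_ge_seven_sixths[OF N u(2) large] .
  hence "0 < N * sin u" by linarith
  hence "0 < sin u" using N by (simp add: zero_less_mult_iff)
  hence "0 < \<gamma>" unfolding \<gamma>_def by (simp add: add_nonneg_pos)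
  have "(7/6)^2 \<le> (N * sin u)^2" using Nsin by (intro power_mono) auto
  hence "9 / N^2 \<le> 8 * sin u ^ 2" using N by (simp add: field_simps power_mult_distrib)
  hence "cos u ^ 2 * (9 / N^2) \<le> cos u ^ 2 * (8 * sin u ^ 2)" by (intro mult_left_mono) auto
  moreover have "\<beta>^2 = cos u ^ 2 * (9 / N^2)" unfolding \<beta>_def by (simp add: power_mult_distrib power_divide)
  moreover have "4 * \<alpha> * \<gamma> = 4 * (sin u * cos u ^ 2)^2 + cos u ^ 2 * (8 * sin u ^ 2)"
    unfolding \<alpha>_def \<gamma>_def by (simp add: algebra_simps power2_eq_square)
  moreover have "0 \<le> (sin u * cos u ^ 2)^2" by simp
  ultimately have "\<beta>^2 \<le> 4 * \<alpha> * \<gamma>" by linarith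
  moreover have "psi N u = \<alpha> * sin (N*u)^2 + \<gamma> * cos (N*u)^2 - \<beta> * sin (N*u) * cos (N*u)"
  proof -
    have "psi N u = sin u * (cos u ^ 2 * (sin (N*u)^2 + cos (N*u)^2) + 2 * cos (N*u)^2)
                    - 3 / (2*N) * cos u * (2 * sin (N*u) * cos (N*u))"
      unfolding psi_def using sin_double[of "N*u"] by (simp add: mult.assoc)
    also have "\<dots> = \<alpha> * sin (N*u)^2 + \<gamma> * cos (N*u)^2 - \<beta> * sin (N*u) * cos (N*u)"
      unfolding \<alpha>_def \<beta>_def \<gamma>_def using N
      by (simp add: field_simps del: sin_cos_squared_add sin_cos_squared_add2 sin_cos_squared_add3)
    finally show ?thesis .
  qed
  ultimately show ?thesis using quadratic_form_nonneg[OF \<open>0 < \<gamma>\<close>] by simp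
qed

lemma psi_nonneg:
  fixes u N :: real assumes "N \<ge> 3" "0 \<le> u" "u \<le> pi/2"
  shows "0 \<le> psi N u"
  using psi_nonneg_small[OF assms] psi_nonneg_large[OF assms] by linarith

lemma sin_half_mult_sum_sin:
  fixes x :: real
  shows "2 * sin (x/2) * (\<Sum>k=1..m. sin (real k * x)) = cos (x/2) - cos ((real m + 1/2) * x)"
proof (induction m)
  case 0
  then show ?case by simp
next
  case (Suc m)
  have a: "(real m + 1/2) * x = (real m + 1) * x - x/2" by (simp add: algebra_simps)
  have b: "(real (Suc m) + 1/2) * x = (real m + 1) * x + x/2" by (simp add: algebra_simps)
  have "2 * sin (x/2) * (\<Sum>k=1..Suc m. sin (real k * x))
      = 2 * sin (x/2) * (\<Sum>k=1..m. sin (real k * x)) + 2 * sin (x/2) * sin ((real m + 1) * x)"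
    by (simp add: algebra_simps)
  also have "\<dots> = cos (x/2) - cos ((real (Suc m) + 1/2) * x)"
    unfolding Suc.IH a b cos_diff cos_add by (simp add: algebra_simps)
  finally show ?case .
qed

lemma sin_half_mult_sine_polynomial:
  fixes n :: nat and x :: real assumes "odd n" "n \<ge> 3"
  shows "2 * sin (x/2) * (5/4 * sin x + (\<Sum>k=2..n-1. sin (real k * x))
           + (2 * real n - 3) / (4 * real n) * sin (real n * x)) = psi (real n) ((pi - x)/2)"
proof -
  define N where "N = real n"
  define u where "u = (pi - x)/2"
  have N3: "N \<ge> 3" using assms by (simp add: N_def)
  have x: "x = pi - 2*u" "x/2 = pi/2 - u" by (simp_all add: u_def field_simps)
  have "(\<Sum>k=1..n-1. sin (real k * x)) = sin x + (\<Sum>k=2..n-1. sin (real k * x))"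
    using sum.atLeast_Suc_atMost[of 1 "n-1" "\<lambda>k. sin (real k * x)"] assms by (simp add: numeral_2_eq_2)
  moreover have "2 * sin (x/2) * (\<Sum>k=1..n-1. sin (real k * x)) = cos (x/2) - cos (N*x - x/2)"
    using sin_half_mult_sum_sin[of x "n-1"] assms by (simp add: N_def of_nat_diff algebra_simps)
  ultimately have telescope: "2 * sin (x/2) * (\<Sum>k=2..n-1. sin (real k * x))
      = cos (x/2) - cos (N*x - x/2) - 2 * sin (x/2) * sin x" by (simp add: algebra_simps)
  have "cos (N * pi) = -1" "sin (N * pi) = 0" unfolding N_def using assms by simp_all
  moreover have "N * x = N * pi - 2*N*u" unfolding x by (simp add: algebra_simps)
  ultimately have "sin (N * x) = sin (2*N*u)" "cos (N * x) = - cos (2*N*u)"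
    by (simp_all add: sin_diff cos_diff)
  moreover have "sin (x/2) = cos u" "cos (x/2) = sin u" unfolding x(2) by (simp_all add: sin_diff cos_diff)
  moreover have "sin x = 2 * sin u * cos u" unfolding x(1) by (simp add: sin_diff sin_double)
  moreover have "cos (N*u)^2 = (1 + cos (2*N*u)) / 2" using cos_double_cos[of "N*u"] by (simp add: mult.assoc)
  ultimately show ?thesis
    unfolding N_def[symmetric] u_def[symmetric] psi_def distrib_left telescope cos_diff using N3
    by (simp add: field_simps) (simp add: power2_eq_square)
qed

theorem lemma1:
  fixes n :: nat and x :: real
  assumes "odd n" and "n \<ge> 3" and "0 \<le> x" and "x \<le> pi"
  shows "5/4 * sin x + (\<Sum>k=2..n-1. sin (real k * x))
           + (2 * real n - 3) / (4 * real n) * sin (real n * x) \<ge> 0" (is "?\<phi> \<ge> 0")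
proof (cases "x = 0")
  case False
  with assms have "0 < 2 * sin (x/2)" by (intro mult_pos_pos sin_gt_zero) auto
  moreover have "2 * sin (x/2) * 0 \<le> 2 * sin (x/2) * ?\<phi>"
    using psi_nonneg[of "real n" "(pi - x)/2"] assms
    unfolding sin_half_mult_sine_polynomial[OF assms(1,2)] by simp
  ultimately show ?thesis by (simp only: mult_le_cancel_left_pos)
qed simp

end
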